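(* For every nonzero integer $m$, every $i\in\mathbb Z$, $k\in\frac12\mathbb Z$, $r\in\mathbb Z_{\ge0}$ and every integer $s>2r$, $$\sum_{p=0}^{s}(-1)^p\left[\begin{matrix}i+m\\ p\end{matrix}\right]_m\left[\begin{matrix}i+(r-p-2)m\\ r\end{matrix}\right]_m\left[\begin{matrix}i+(r-p+1)m\\ s-p\end{matrix}\right]_m=0$$ and $$\sum_{p=0}^{s}(-1)^p\left[\begin{matrix}k+\frac m2\\ p\end{matrix}\right]_m\left[\begin{matrix}k+(r-p-\frac32)m\\ r\end{matrix}\right]_m\left[\begin{matrix}k+(r-p+\frac12)m\\ s-p\end{matrix}\right]_m=0.$$
   Context: For $a,c$ in a field of characteristic zero and $r\in\mathbb Z_{\ge0}$: $\left[\begin{matrix}a\\ r\end{matrix}\right]_c=\frac{a(a-c)(a-2c)\cdots(a-(r-1)c)}{r!}$ ($=1$ if $r=0$). *)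

theory Defs
  imports Complex_Main
begin

text \<open>Generalized binomial with step c:
  [a; r]_c = a(a-c)(a-2c)...(a-(r-1)c) / r!  (= 1 for r = 0).\<close>
definition cbinom :: "'a::field_char_0 \<Rightarrow> 'a \<Rightarrow> nat \<Rightarrow> 'a" where
  "cbinom a c r = (\<Prod>j<r. a - of_nat j * c) / of_nat (fact r)"

end

theory Submission
  imports Defs "HOL-Computational_Algebra.Formal_Power_Series"
begin

(* The step-c binomial [a; n]_c equals c^n * ((a/c) gchoose n) for c \<noteq> 0, so both
   identities of the theorem are instances of one identity for ordinary generalized
   binomial coefficients: for all x, w in a field of characteristic zero and 2r < s,
     \<Sum>p\<le>s. (-1)^p (x gchoose p) ((x + w - p) gchoose r) ((x + r - p) gchoose (s - p)) = 0.
   To prove it, expand the middle factor by Vandermonde's identity as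
   \<Sum>j\<le>r. ((x - p) gchoose j) (w gchoose (r - j)), and trade (x gchoose p) ((x - p) gchoose j)
   for (x gchoose j) ((x - j) gchoose p).  After exchanging the sums, each inner sum over p
   is an alternating Vandermonde sum, which equals \<plusminus>((s - r - j - 1) gchoose s) = 0
   because 0 \<le> s - r - j - 1 < s.  Scaling back to step m gives the first identity with
   a = i + m and the second one with a = k + m/2 (for every real k). *)

text \<open>Vandermonde's identity with alternating signs and shifted upper argument in the
  second factor; obtained from the classical one by negating the upper argument.\<close>
lemma gbinomial_alternating_Vandermonde:
  fixes z y :: "'a::field_char_0"
  shows "(\<Sum>p=0..s. (-1)^p * (z gchoose p) * ((y - of_nat p) gchoose (s - p)))
         = (-1)^s * ((z + of_nat s - y - 1) gchoose s)"
proof -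
  have "(\<Sum>p=0..s. (-1)^p * (z gchoose p) * ((y - of_nat p) gchoose (s - p)))
      = (\<Sum>p=0..s. (-1)^s * ((z gchoose p) * ((of_nat s - y - 1) gchoose (s - p))))"
  proof (rule sum.cong)
    fix p assume p: "p \<in> {0..s}"
    have negate: "((y - of_nat p) gchoose (s - p))
                  = (-1)^(s - p) * ((of_nat s - y - 1) gchoose (s - p))"
      using gbinomial_negated_upper[of "y - of_nat p" "s - p"] p by (simp add: of_nat_diff)
    have sign: "(-1::'a)^p * (-1)^(s - p) = (-1)^s"
      using p by (simp flip: power_add)
    show "(-1)^p * (z gchoose p) * ((y - of_nat p) gchoose (s - p))
          = (-1)^s * ((z gchoose p) * ((of_nat s - y - 1) gchoose (s - p)))"
      unfolding negate sign[symmetric] by (simp add: ac_simps)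
  qed simp
  also have "\<dots> = (-1)^s * ((z + (of_nat s - y - 1)) gchoose s)"
    by (simp add: sum_distrib_left [symmetric] gbinomial_Vandermonde)
  finally show ?thesis by (simp add: algebra_simps)
qed

text \<open>Choosing first p and then j elements is the same as choosing first j and then p.\<close>
lemma gbinomial_choose_twice_commute:
  fixes x :: "'a::field_char_0"
  shows "(x gchoose p) * ((x - of_nat p) gchoose j) = (x gchoose j) * ((x - of_nat j) gchoose p)"
proof -
  have "(x gchoose p) * ((x - of_nat p) gchoose j) = (x gchoose (p + j)) * (of_nat (p + j) gchoose p)"
    using gbinomial_trinomial_revision[of p "p + j" x] by simp
  also have "(of_nat (p + j) gchoose p :: 'a) = of_nat (p + j) gchoose j"
    using gbinomial_of_nat_symmetric[of p "p + j"] by simp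
  also have "(x gchoose (p + j)) * \<dots> = (x gchoose j) * ((x - of_nat j) gchoose p)"
    using gbinomial_trinomial_revision[of j "p + j" x] by simp
  finally show ?thesis .
qed

lemma gbinomial_triple_alternating_sum_zero:
  fixes x w :: "'a::field_char_0"
  assumes "2 * r < s"
  shows "(\<Sum>p=0..s. (-1)^p * (x gchoose p) * ((x + w - of_nat p) gchoose r)
            * ((x + of_nat r - of_nat p) gchoose (s - p))) = 0"
proof -
  define inner where
    "inner j = (\<Sum>p=0..s. (-1)^p * ((x - of_nat j) gchoose p)
                           * ((x + of_nat r - of_nat p) gchoose (s - p)))" for j
  have middle: "((x + w - of_nat p) gchoose r)
                = (\<Sum>j=0..r. ((x - of_nat p) gchoose j) * (w gchoose (r - j)))" for p
    using gbinomial_Vandermonde[of "x - of_nat p" w r] by (simp add: algebra_simps)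
  have "(\<Sum>p=0..s. (-1)^p * (x gchoose p) * ((x + w - of_nat p) gchoose r)
            * ((x + of_nat r - of_nat p) gchoose (s - p)))
      = (\<Sum>p=0..s. \<Sum>j=0..r. (w gchoose (r - j)) * (x gchoose j) * ((-1)^p
            * ((x - of_nat j) gchoose p) * ((x + of_nat r - of_nat p) gchoose (s - p))))"
    unfolding middle sum_distrib_left sum_distrib_right
    by (intro sum.cong refl) (simp add: gbinomial_choose_twice_commute[symmetric] ac_simps)
  also have "\<dots> = (\<Sum>j=0..r. (w gchoose (r - j)) * (x gchoose j) * inner j)"
    unfolding inner_def by (subst sum.swap) (simp add: sum_distrib_left)
  also have "\<dots> = 0"
  proof (intro sum.neutral ballI)
    fix j assume j: "j \<in> {0..r}"
    have "x - of_nat j + of_nat s - (x + of_nat r) - 1 = (of_nat (s - r - j - 1) :: 'a)"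
      using j assms by (simp add: of_nat_diff)
    moreover have "(of_nat (s - r - j - 1) gchoose s :: 'a) = 0"
      using assms by (simp flip: binomial_gbinomial)
    ultimately have "inner j = 0"
      using gbinomial_alternating_Vandermonde[where s = s and z = "x - of_nat j" and y = "x + of_nat r"]
      by (simp add: inner_def)
    then show "(w gchoose (r - j)) * (x gchoose j) * inner j = 0" by simp
  qed
  finally show ?thesis .
qed

lemma cbinom_gbinomial:
  fixes a c :: "'a::field_char_0"
  assumes "c \<noteq> 0"
  shows "cbinom a c n = c ^ n * ((a / c) gchoose n)"
proof -
  have "(\<Prod>j<n. a - of_nat j * c) = (\<Prod>j<n. c * (a / c - of_nat j))"
    using assms by (intro prod.cong) (auto simp: field_simps)
  also have "\<dots> = c ^ n * (\<Prod>j<n. a / c - of_nat j)"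
    by (simp add: prod.distrib)
  finally show ?thesis
    by (simp add: cbinom_def gbinomial_prod_rev atLeast0LessThan)
qed

lemma cbinom_triple_alternating_sum_zero:
  fixes a b c :: "'a::field_char_0"
  assumes "c \<noteq> 0" and "2 * r < s"
  shows "(\<Sum>p=0..s. (-1)^p * cbinom a c p * cbinom (a + b - of_nat p * c) c r
            * cbinom (a + (of_nat r - of_nat p) * c) c (s - p)) = 0"
proof -
  let ?x = "a / c" and ?w = "b / c"
  have summand: "(-1)^p * cbinom a c p * cbinom (a + b - of_nat p * c) c r
                * cbinom (a + (of_nat r - of_nat p) * c) c (s - p)
              = c ^ (r + s) * ((-1)^p * (?x gchoose p) * ((?x + ?w - of_nat p) gchoose r)
                * ((?x + of_nat r - of_nat p) gchoose (s - p)))" if "p \<le> s" for p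
  proof -
    have "c ^ p * c ^ r * c ^ (s - p) = c ^ (r + s)"
      using that by (simp flip: power_add)
    then show ?thesis
      using assms(1) by (simp add: cbinom_gbinomial field_simps)
  qed
  have "(\<Sum>p=0..s. (-1)^p * cbinom a c p * cbinom (a + b - of_nat p * c) c r
            * cbinom (a + (of_nat r - of_nat p) * c) c (s - p))
      = c ^ (r + s) * (\<Sum>p=0..s. (-1)^p * (?x gchoose p) * ((?x + ?w - of_nat p) gchoose r)
                * ((?x + of_nat r - of_nat p) gchoose (s - p)))"
    by (simp add: summand sum_distrib_left)
  also have "\<dots> = 0"
    by (simp only: gbinomial_triple_alternating_sum_zero[OF assms(2)] mult_zero_right)
  finally show ?thesis .
qed

theorem mainTheorem2:
  fixes m i :: int and k :: real and r s :: nat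
  assumes "m \<noteq> 0" and "\<exists>j::int. k = of_int j / 2" and "s > 2 * r"
  shows "(\<Sum>p=0..s. (-1::real) ^ p
            * cbinom (of_int (i + m)) (of_int m) p
            * cbinom (of_int (i + (int r - int p - 2) * m)) (of_int m) r
            * cbinom (of_int (i + (int r - int p + 1) * m)) (of_int m) (s - p)) = 0
       \<and> (\<Sum>p=0..s. (-1::real) ^ p
            * cbinom (k + of_int m / 2) (of_int m) p
            * cbinom (k + (of_int (int r - int p) - 3/2) * of_int m) (of_int m) r
            * cbinom (k + (of_int (int r - int p) + 1/2) * of_int m) (of_int m) (s - p)) = 0"
proof
  have m: "(of_int m :: real) \<noteq> 0" using assms(1) by simp
  note vanish = cbinom_triple_alternating_sum_zero[OF m assms(3)]
  show "(\<Sum>p=0..s. (-1::real) ^ p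
            * cbinom (of_int (i + m)) (of_int m) p
            * cbinom (of_int (i + (int r - int p - 2) * m)) (of_int m) r
            * cbinom (of_int (i + (int r - int p + 1) * m)) (of_int m) (s - p)) = 0"
    using vanish[of "of_int (i + m)" "(of_nat r - 3) * of_int m"]
    by (simp add: algebra_simps)
  show "(\<Sum>p=0..s. (-1::real) ^ p
            * cbinom (k + of_int m / 2) (of_int m) p
            * cbinom (k + (of_int (int r - int p) - 3/2) * of_int m) (of_int m) r
            * cbinom (k + (of_int (int r - int p) + 1/2) * of_int m) (of_int m) (s - p)) = 0"
    using vanish[of "k + of_int m / 2" "(of_nat r - 2) * of_int m"]
    by (simp add: algebra_simps)
qed

end
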